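(* Consider the NOMA-aided cell-free massive MIMO UE clustering problem with fixed power allocation described in the context. A clustering matrix $\mathbf X$ is an all-stable solution if there is no negative differ-cluster loop in the extended graph $D(\mathcal N^e,\varepsilon;\mathbf X)$ whose associated cluster change increases the ASR while satisfying all constraints of the clustering problem.
   Context: There are $N$ URLLC UEs and $G$ clusters; clustering matrix $\mathbf X=[x_{gn}]$ with $x_{gn}\in\{0,1\}$, $\sum_g x_{gn}=1$, and $\pi_n$ the cluster of UE $n$. With fixed powers, each UE has rate $\hat R_n(\mathbf X)=\frac{\eta}{\ln 2}(\ln(1+\bar\gamma_n)-a_nM(\bar\gamma_n))$ ($\bar\gamma_n$ its effective average SINR, $\eta,a_n>0$ constants, $M(\gamma)=\sqrt{1-(1+\gamma^{-1})^{-2}}$), and the ASR is $\sum_n\hat R_n(\mathbf X)$. The clustering problem is: maximize the ASR over $\mathbf X$ subject to $\hat R_n\ge\hat R_n^{req}$ for all $n$ and each UE belonging to exactly one cluster. Cluster rate $\omega_g(\mathbf X)=\sum_n x_{gn}(\ln(1+\bar\gamma_n)-a_nM(\bar\gamma_n))$. Notation $n\to n'$: UE $n$ is moved into the cluster of UE $n'$ and $n'$ is removed from it. For UEs $n_1,\dots,n_K$ in different clusters: they form a $K$-exchange union if $n_1\to n_2,\dots,n_{K-1}\to n_K,n_K\to n_1$ yields $\tilde{\mathbf X}$ with ASR$(\mathbf X)\le$ ASR$(\tilde{\mathbf X})$; they form a $K$-shift union if $n_1\to n_2,\dots,n_{K-2}\to n_{K-1}$ followed by adding $n_{K-1}$ to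 the cluster of $n_K$ yields $\tilde{\mathbf X}$ with ASR$(\mathbf X)\le$ ASR$(\tilde{\mathbf X})$. $\mathbf X$ is an all-stable solution if no shift union or exchange union exists with all constraints of the clustering problem satisfied. The extended weighted directed graph $D(\mathcal N^e,\varepsilon;\mathbf X)$ has as nodes all real UEs plus one virtual UE $n_g^v$ in each cluster $g$ (virtual UEs have rate $0$, receive no power, and do not take part in SIC ordering), edges only between nodes in different clusters, and weights $z_{ij}=\omega_{\pi_j}(\mathbf X)-\omega_{\pi_j}(x_{\pi_j i}=1,x_{\pi_j j}=0,\mathbf X_{-i,j})$ for $\pi_i\ne\pi_j$ (rate of cluster $\pi_j$ before minus after placing $i$ in it and removing $j$, other assignments unchanged) and $z_{ij}=\infty$ otherwise. A negative differ-cluster loop is a directed cycle with total weight less than $0$ whose nodes all lie in different clusters; its associated cluster change is $n_1\to n_2\to\cdots\to n_K\to n_1$ along the cycle. *)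

theory Defs
  imports Complex_Main
begin

(* UEs have type 'u, clusters type 'c.  A clustering matrix X = [x_gn] with
   sum_g x_gn = 1 is represented by the cluster map X :: 'u => 'c (pi_n = X n,
   x_gn = 1 iff X n = g). *)

definition Mf :: "real \<Rightarrow> real" where
  "Mf \<gamma> = sqrt (1 - inverse ((1 + inverse \<gamma>) ^ 2))"

(* gam n S : effective average SINR of UE n when the (real) UEs of its cluster are S *)
definition rho :: "('u \<Rightarrow> 'u set \<Rightarrow> real) \<Rightarrow> ('u \<Rightarrow> real) \<Rightarrow> 'u \<Rightarrow> 'u set \<Rightarrow> real" where
  "rho gam a n S = ln (1 + gam n S) - a n * Mf (gam n S)"

definition members :: "'u set \<Rightarrow> ('u \<Rightarrow> 'c) \<Rightarrow> 'c \<Rightarrow> 'u set" where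
  "members N X g = {n \<in> N. X n = g}"

definition Rhat :: "real \<Rightarrow> ('u \<Rightarrow> 'u set \<Rightarrow> real) \<Rightarrow> ('u \<Rightarrow> real) \<Rightarrow> 'u set
    \<Rightarrow> ('u \<Rightarrow> 'c) \<Rightarrow> 'u \<Rightarrow> real" where
  "Rhat eta gam a N X n = eta / ln 2 * rho gam a n (members N X (X n))"

definition ASR :: "real \<Rightarrow> ('u \<Rightarrow> 'u set \<Rightarrow> real) \<Rightarrow> ('u \<Rightarrow> real) \<Rightarrow> 'u set
    \<Rightarrow> ('u \<Rightarrow> 'c) \<Rightarrow> real" where
  "ASR eta gam a N X = (\<Sum>n\<in>N. Rhat eta gam a N X n)"

definition feasible :: "real \<Rightarrow> ('u \<Rightarrow> 'u set \<Rightarrow> real) \<Rightarrow> ('u \<Rightarrow> real) \<Rightarrow> ('u \<Rightarrow> real)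
    \<Rightarrow> 'u set \<Rightarrow> 'c set \<Rightarrow> ('u \<Rightarrow> 'c) \<Rightarrow> bool" where
  "feasible eta gam a Rreq N G X =
     (\<forall>n\<in>N. X n \<in> G \<and> Rhat eta gam a N X n \<ge> Rreq n)"

definition omega_set :: "('u \<Rightarrow> 'u set \<Rightarrow> real) \<Rightarrow> ('u \<Rightarrow> real) \<Rightarrow> 'u set \<Rightarrow> real" where
  "omega_set gam a S = (\<Sum>n\<in>S. rho gam a n S)"

definition omega :: "('u \<Rightarrow> 'u set \<Rightarrow> real) \<Rightarrow> ('u \<Rightarrow> real) \<Rightarrow> 'u set
    \<Rightarrow> ('u \<Rightarrow> 'c) \<Rightarrow> 'c \<Rightarrow> real" where
  "omega gam a N X g = omega_set gam a (members N X g)"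

definition diff_clusters :: "('v \<Rightarrow> 'c) \<Rightarrow> 'v list \<Rightarrow> bool" where
  "diff_clusters cl vs = (\<forall>i<length vs. \<forall>j<length vs. i \<noteq> j \<longrightarrow> cl (vs ! i) \<noteq> cl (vs ! j))"

(* n_1 -> n_2, ..., n_{K-1} -> n_K, n_K -> n_1 *)
definition exchange_change :: "('u \<Rightarrow> 'c) \<Rightarrow> 'u list \<Rightarrow> ('u \<Rightarrow> 'c)" where
  "exchange_change X ns =
     foldl (\<lambda>Y k. Y(ns ! k := X (ns ! ((k + 1) mod length ns)))) X [0..<length ns]"

(* n_1 -> n_2, ..., n_{K-2} -> n_{K-1}, then n_{K-1} added to the cluster of n_K *)
definition shift_change :: "('u \<Rightarrow> 'c) \<Rightarrow> 'u list \<Rightarrow> ('u \<Rightarrow> 'c)" where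
  "shift_change X ns =
     foldl (\<lambda>Y k. Y(ns ! k := X (ns ! (k + 1)))) X [0..<length ns - 1]"

definition exchange_union :: "real \<Rightarrow> ('u \<Rightarrow> 'u set \<Rightarrow> real) \<Rightarrow> ('u \<Rightarrow> real) \<Rightarrow> 'u set
    \<Rightarrow> ('u \<Rightarrow> 'c) \<Rightarrow> 'u list \<Rightarrow> bool" where
  "exchange_union eta gam a N X ns =
     (2 \<le> length ns \<and> set ns \<subseteq> N \<and> diff_clusters X ns \<and>
      ASR eta gam a N X < ASR eta gam a N (exchange_change X ns))"

definition shift_union :: "real \<Rightarrow> ('u \<Rightarrow> 'u set \<Rightarrow> real) \<Rightarrow> ('u \<Rightarrow> real) \<Rightarrow> 'u set
    \<Rightarrow> ('u \<Rightarrow> 'c) \<Rightarrow> 'u list \<Rightarrow> bool" where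
  "shift_union eta gam a N X ns =
     (2 \<le> length ns \<and> set ns \<subseteq> N \<and> diff_clusters X ns \<and>
      ASR eta gam a N X < ASR eta gam a N (shift_change X ns))"

definition all_stable :: "real \<Rightarrow> ('u \<Rightarrow> 'u set \<Rightarrow> real) \<Rightarrow> ('u \<Rightarrow> real) \<Rightarrow> ('u \<Rightarrow> real)
    \<Rightarrow> 'u set \<Rightarrow> 'c set \<Rightarrow> ('u \<Rightarrow> 'c) \<Rightarrow> bool" where
  "all_stable eta gam a Rreq N G X =
     ((\<nexists>ns. exchange_union eta gam a N X ns \<and> feasible eta gam a Rreq N G (exchange_change X ns)) \<and>
      (\<nexists>ns. shift_union eta gam a N X ns \<and> feasible eta gam a Rreq N G (shift_change X ns)))"

(* Extended graph: nodes Inl n (real UE n) and Inr g (virtual UE of cluster g) *)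
fun nclu :: "('u \<Rightarrow> 'c) \<Rightarrow> 'u + 'c \<Rightarrow> 'c" where
  "nclu X (Inl n) = X n"
| "nclu X (Inr g) = g"

fun real_part :: "'u + 'c \<Rightarrow> 'u set" where
  "real_part (Inl n) = {n}"
| "real_part (Inr g) = {}"

definition ext_nodes :: "'u set \<Rightarrow> 'c set \<Rightarrow> ('u + 'c) set" where
  "ext_nodes N G = Inl ` N \<union> Inr ` G"

(* weight z_ij of edge i -> j (edges exist only when nclu X i \<noteq> nclu X j) *)
definition zw :: "('u \<Rightarrow> 'u set \<Rightarrow> real) \<Rightarrow> ('u \<Rightarrow> real) \<Rightarrow> 'u set \<Rightarrow> ('u \<Rightarrow> 'c)
    \<Rightarrow> 'u + 'c \<Rightarrow> 'u + 'c \<Rightarrow> real" where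
  "zw gam a N X i j =
     omega gam a N X (nclu X j)
     - omega_set gam a ((members N X (nclu X j) - real_part j) \<union> real_part i)"

definition neg_loop :: "('u \<Rightarrow> 'u set \<Rightarrow> real) \<Rightarrow> ('u \<Rightarrow> real) \<Rightarrow> 'u set \<Rightarrow> 'c set
    \<Rightarrow> ('u \<Rightarrow> 'c) \<Rightarrow> ('u + 'c) list \<Rightarrow> bool" where
  "neg_loop gam a N G X vs =
     (2 \<le> length vs \<and> set vs \<subseteq> ext_nodes N G \<and> diff_clusters (nclu X) vs \<and>
      (\<Sum>k<length vs. zw gam a N X (vs ! k) (vs ! ((k + 1) mod length vs))) < 0)"

definition loop_change :: "('u \<Rightarrow> 'c) \<Rightarrow> ('u + 'c) list \<Rightarrow> ('u \<Rightarrow> 'c)" where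
  "loop_change X vs =
     foldl (\<lambda>Y k. case vs ! k of
                     Inl n \<Rightarrow> Y(n := nclu X (vs ! ((k + 1) mod length vs)))
                   | Inr _ \<Rightarrow> Y) X [0..<length vs]"

end

theory Submission
  imports Defs
begin

(* Every exchange union is the cluster change of the differ-cluster loop through its UEs, and every
   shift union that of the loop which ends at the virtual UE of the cluster of n_K instead of n_K
   itself, so that n_K stays put.  Along such a loop v_1 ... v_K the new cluster of v_(k+1) is its
   old one with v_(k+1) replaced by v_k, so the weight of the edge v_k -> v_(k+1) is the rate that
   this cluster loses.  The loop meets each affected cluster exactly once and all other clusters are
   unchanged, hence the loop weight is (ln 2 / eta) (ASR X - ASR X'): negative as soon as the change
   increases the ASR. *)

lemma diff_clusters_iff_distinct: "diff_clusters cl vs \<longleftrightarrow> distinct (map cl vs)"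
  by (simp add: diff_clusters_def distinct_conv_nth)

lemma bij_betw_Suc_mod: "bij_betw (\<lambda>k. (k + 1) mod K) {..<K} {..<(K::nat)}"
proof -
  have inj: "inj_on (\<lambda>k. (k + 1) mod K) {..<K}"
    by (rule inj_onI) (auto simp: mod_if split: if_splits)
  then have "(\<lambda>k. (k + 1) mod K) ` {..<K} = {..<K}"
    by (intro endo_inj_surj) auto
  with inj show ?thesis
    by (simp add: bij_betw_def)
qed

lemma Suc_mod_length_less: "i < length xs \<Longrightarrow> Suc i mod length xs < length xs"
  by (auto intro: mod_less_divisor)

lemma foldl_case_sum_upd_outside:
  "Inl n \<notin> (!) vs ` {..<m} \<Longrightarrow>
   foldl (\<lambda>Y k. case vs ! k of Inl u \<Rightarrow> Y(u := c k) | Inr _ \<Rightarrow> Y) X [0..<m] n = X n"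
  by (induction m) (auto simp: lessThan_Suc split: sum.split)

lemma foldl_case_sum_upd_at:
  assumes "inj_on ((!) vs) {..<m}" "k < m" "vs ! k = Inl n"
  shows "foldl (\<lambda>Y k. case vs ! k of Inl u \<Rightarrow> Y(u := c k) | Inr _ \<Rightarrow> Y) X [0..<m] n = c k"
  using assms
proof (induction m)
  case (Suc m)
  show ?case
  proof (cases "k = m")
    case False
    then have "vs ! m \<noteq> Inl n"
      using Suc.prems by (metis inj_on_contraD lessThan_iff less_Suc_eq)
    moreover have "inj_on ((!) vs) {..<m}" "k < m"
      using Suc.prems False by (auto intro: inj_on_subset)
    ultimately show ?thesis
      using Suc.IH Suc.prems by (auto split: sum.split)
  qed (use Suc.prems in simp)
qed simp

lemma loop_change_outside: "Inl n \<notin> set vs \<Longrightarrow> loop_change X vs n = X n"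
  unfolding loop_change_def by (rule foldl_case_sum_upd_outside) (auto simp: in_set_conv_nth)

lemma loop_change_at:
  assumes "distinct vs" "k < length vs" "vs ! k = Inl n"
  shows "loop_change X vs n = nclu X (vs ! ((k + 1) mod length vs))"
  unfolding loop_change_def
  by (rule foldl_case_sum_upd_at) (use assms in \<open>auto intro: inj_on_nth\<close>)

lemma loop_change_in_clusters:
  assumes "distinct vs" "Inl n \<in> set vs"
  shows "loop_change X vs n \<in> nclu X ` set vs"
proof -
  obtain i where i: "i < length vs" "vs ! i = Inl n"
    using assms(2) by (metis in_set_conv_nth)
  then show ?thesis
    using loop_change_at[OF assms(1) i] nth_mem[OF Suc_mod_length_less[OF i(1)]] by simp
qed

lemma real_part_iff: "n \<in> real_part v \<longleftrightarrow> v = Inl n"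
  by (cases v) auto

lemma members_loop_change_edge:
  assumes dist: "distinct (map (nclu X) vs)" and k: "k < length vs"
    and N: "Inl -` set vs \<subseteq> N"
  shows "members N (loop_change X vs) (nclu X (vs ! ((k + 1) mod length vs)))
    = members N X (nclu X (vs ! ((k + 1) mod length vs))) - real_part (vs ! ((k + 1) mod length vs))
      \<union> real_part (vs ! k)"
    (is "members N ?Y _ = ?rhs")
proof (rule set_eqI)
  fix n
  let ?cl = "\<lambda>i. nclu X (vs ! i)" and ?next = "\<lambda>i. (i + 1) mod length vs"
  have "distinct vs"
    using dist by (simp add: distinct_map)
  have cl_inj: "i = j" if "i < length vs" "j < length vs" "?cl i = ?cl j" for i j
    using dist that by (simp add: distinct_conv_nth) metis
  have next_inj: "inj_on ?next {..<length vs}"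
    using bij_betw_Suc_mod by (rule bij_betw_imp_inj_on)
  show "n \<in> members N ?Y (?cl (?next k)) \<longleftrightarrow> n \<in> ?rhs"
  proof (cases "Inl n \<in> set vs")
    case False
    then have "vs ! k \<noteq> Inl n" "vs ! ?next k \<noteq> Inl n"
      using k Suc_mod_length_less[OF k] by (metis Suc_eq_plus1 nth_mem)+
    with False show ?thesis
      by (simp add: loop_change_outside members_def real_part_iff)
  next
    case True
    then obtain i where i: "i < length vs" "vs ! i = Inl n"
      by (metis in_set_conv_nth)
    have "n \<in> N"
      using N True by auto
    have "n \<in> members N ?Y (?cl (?next k)) \<longleftrightarrow> ?next i = ?next k"
      using \<open>n \<in> N\<close> loop_change_at[OF \<open>distinct vs\<close> i]
        cl_inj[OF Suc_mod_length_less[OF i(1)] Suc_mod_length_less[OF k]]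
      by (auto simp: members_def)
    also have "\<dots> \<longleftrightarrow> i = k"
      using inj_onD[OF next_inj] i(1) k by blast
    also have "\<dots> \<longleftrightarrow> n \<in> ?rhs"
      using \<open>n \<in> N\<close> i cl_inj[OF i(1) Suc_mod_length_less[OF k]]
        nth_eq_iff_index_eq[OF \<open>distinct vs\<close> k i(1)]
      by (auto simp: members_def real_part_iff)
    finally show ?thesis .
  qed
qed

lemma members_loop_change_outside:
  assumes "distinct vs" "g \<notin> nclu X ` set vs"
  shows "members N (loop_change X vs) g = members N X g"
proof -
  have "loop_change X vs n = g \<longleftrightarrow> X n = g" for n
  proof (cases "Inl n \<in> set vs")
    case True
    then have "X n \<in> nclu X ` set vs"
      by force
    with True assms show ?thesis
      using loop_change_in_clusters by metis
  qed (simp add: loop_change_outside)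
  then show ?thesis
    by (simp add: members_def)
qed

lemma zw_loop_edge:
  assumes "distinct (map (nclu X) vs)" "k < length vs" "Inl -` set vs \<subseteq> N"
  shows "zw gam a N X (vs ! k) (vs ! ((k + 1) mod length vs))
    = omega gam a N X (nclu X (vs ! ((k + 1) mod length vs)))
      - omega gam a N (loop_change X vs) (nclu X (vs ! ((k + 1) mod length vs)))"
  unfolding zw_def omega_def members_loop_change_edge[OF assms] by (rule refl)

lemma loop_weight_eq_sum_omega_diff:
  assumes dist: "distinct (map (nclu X) vs)" and N: "Inl -` set vs \<subseteq> N"
  shows "(\<Sum>k<length vs. zw gam a N X (vs ! k) (vs ! ((k + 1) mod length vs)))
    = (\<Sum>g\<in>nclu X ` set vs. omega gam a N X g - omega gam a N (loop_change X vs) g)"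
proof -
  let ?d = "\<lambda>g. omega gam a N X g - omega gam a N (loop_change X vs) g"
  have "(\<Sum>k<length vs. zw gam a N X (vs ! k) (vs ! ((k + 1) mod length vs)))
      = (\<Sum>k<length vs. ?d (nclu X (vs ! ((k + 1) mod length vs))))"
    using zw_loop_edge[OF dist _ N] by simp
  also have "\<dots> = (\<Sum>k<length vs. ?d (nclu X (vs ! k)))"
    using sum.reindex_bij_betw[OF bij_betw_Suc_mod, of "\<lambda>k. ?d (nclu X (vs ! k))"] by simp
  also have "\<dots> = sum_list (map ?d (map (nclu X) vs))"
    by (simp add: sum_list_sum_nth atLeast0LessThan)
  also have "\<dots> = (\<Sum>g\<in>nclu X ` set vs. ?d g)"
    using sum_list_distinct_conv_sum_set[OF dist, of ?d] by simp
  finally show ?thesis .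
qed

lemma ASR_eq_sum_omega:
  assumes "finite N" "finite S" "Z ` N \<subseteq> S"
  shows "ASR eta gam a N Z = eta / ln 2 * (\<Sum>g\<in>S. omega gam a N Z g)"
proof -
  have "(\<Sum>n\<in>N. rho gam a n (members N Z (Z n)))
      = (\<Sum>g\<in>S. \<Sum>n\<in>{n \<in> N. Z n = g}. rho gam a n (members N Z (Z n)))"
    by (rule sum.group[OF assms, symmetric])
  also have "\<dots> = (\<Sum>g\<in>S. omega gam a N Z g)"
    by (intro sum.cong) (auto simp: omega_def omega_set_def members_def)
  finally show ?thesis
    by (simp only: ASR_def Rhat_def flip: sum_distrib_left)
qed

lemma loop_weight_negative_if_ASR_increase:
  assumes "finite N" "eta > 0"
    and dist: "distinct (map (nclu X) vs)" and N: "Inl -` set vs \<subseteq> N"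
    and increase: "ASR eta gam a N X < ASR eta gam a N (loop_change X vs)"
  shows "(\<Sum>k<length vs. zw gam a N X (vs ! k) (vs ! ((k + 1) mod length vs))) < 0"
proof -
  define Y where "Y = loop_change X vs"
  define C where "C = nclu X ` set vs"
  define S where "S = X ` N \<union> C"
  have "distinct vs"
    using dist by (simp add: distinct_map)
  have "finite S"
    using \<open>finite N\<close> by (simp add: S_def C_def)
  have "X ` N \<subseteq> S"
    by (auto simp: S_def)
  moreover have "Y ` N \<subseteq> S"
    using loop_change_in_clusters[OF \<open>distinct vs\<close>] loop_change_outside
    by (fastforce simp: S_def C_def Y_def)
  ultimately have "eta / ln 2 * (\<Sum>g\<in>S. omega gam a N X g)
      < eta / ln 2 * (\<Sum>g\<in>S. omega gam a N Y g)"
    using increase ASR_eq_sum_omega[OF \<open>finite N\<close> \<open>finite S\<close>]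
    by (simp only: Y_def)
  then have "(\<Sum>g\<in>S. omega gam a N X g) < (\<Sum>g\<in>S. omega gam a N Y g)"
    by (rule mult_left_less_imp_less) (use \<open>eta > 0\<close> in simp)
  moreover have "(\<Sum>g\<in>C. omega gam a N X g - omega gam a N Y g)
      = (\<Sum>g\<in>S. omega gam a N X g - omega gam a N Y g)"
    using \<open>finite S\<close> members_loop_change_outside[OF \<open>distinct vs\<close>]
    by (intro sum.mono_neutral_left) (auto simp: S_def C_def Y_def omega_def)
  ultimately show ?thesis
    using loop_weight_eq_sum_omega_diff[OF dist N] by (simp add: C_def Y_def sum_subtractf)
qed

lemma neg_loop_if_ASR_increase:
  assumes "finite N" "eta > 0" "2 \<le> length vs" "set vs \<subseteq> ext_nodes N G"
    and "diff_clusters (nclu X) vs"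
    and "ASR eta gam a N X < ASR eta gam a N (loop_change X vs)"
  shows "neg_loop gam a N G X vs"
proof -
  have "Inl -` set vs \<subseteq> N"
    using assms(4) by (auto simp: ext_nodes_def)
  then show ?thesis
    using assms loop_weight_negative_if_ASR_increase
    by (simp add: neg_loop_def diff_clusters_iff_distinct)
qed

lemma loop_change_map_Inl: "loop_change X (map Inl ns) = exchange_change X ns"
  unfolding loop_change_def exchange_change_def
  by (intro foldl_cong) (auto simp: Suc_mod_length_less)

definition shift_loop :: "('u \<Rightarrow> 'c) \<Rightarrow> 'u list \<Rightarrow> ('u + 'c) list" where
  "shift_loop X ns = map Inl (butlast ns) @ [Inr (X (last ns))]"

lemma map_nclu_shift_loop: "ns \<noteq> [] \<Longrightarrow> map (nclu X) (shift_loop X ns) = map X ns"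
proof -
  assume "ns \<noteq> []"
  then have "map X ns = map X (butlast ns) @ [X (last ns)]"
    by (metis append_butlast_last_id list.map(1,2) map_append)
  then show ?thesis
    by (simp add: shift_loop_def)
qed

lemma loop_change_shift_loop:
  assumes "ns \<noteq> []"
  shows "loop_change X (shift_loop X ns) = shift_change X ns"
proof -
  obtain ms m where ns: "ns = ms @ [m]"
    using assms rev_exhaust by blast
  let ?vs = "map Inl ms @ [Inr (X m)]"
  let ?step = "\<lambda>Y k. case ?vs ! k of
      Inl n \<Rightarrow> Y(n := nclu X (?vs ! ((k + 1) mod length ?vs)))
    | Inr _ \<Rightarrow> Y"
  have vs: "shift_loop X ns = ?vs"
    by (simp add: ns shift_loop_def)
  have "loop_change X ?vs = foldl ?step X [0..<length ms]"
    by (simp add: loop_change_def nth_append)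
  also have "\<dots> = foldl (\<lambda>Y k. Y(ns ! k := X (ns ! (k + 1)))) X [0..<length ms]"
  proof (rule foldl_cong)
    fix Y k assume "k \<in> set [0..<length ms]"
    then show "?step Y k = Y(ns ! k := X (ns ! (k + 1)))"
      by (auto simp: ns nth_append)
  qed simp_all
  also have "\<dots> = shift_change X ns"
    by (simp add: shift_change_def ns)
  finally show ?thesis
    by (simp only: vs)
qed

lemma exchange_union_neg_loop:
  assumes "finite N" "eta > 0" "exchange_union eta gam a N X ns"
  shows "neg_loop gam a N G X (map Inl ns)"
  using assms
  by (intro neg_loop_if_ASR_increase)
    (auto simp: exchange_union_def loop_change_map_Inl ext_nodes_def
      diff_clusters_iff_distinct comp_def)

lemma shift_union_neg_loop:
  assumes "finite N" "eta > 0" "\<forall>n\<in>N. X n \<in> G" "shift_union eta gam a N X ns"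
  shows "neg_loop gam a N G X (shift_loop X ns)"
proof (rule neg_loop_if_ASR_increase)
  have ns: "ns \<noteq> []" "set ns \<subseteq> N"
    using assms(4) by (auto simp: shift_union_def)
  moreover have "X (last ns) \<in> G"
    using assms(3) ns last_in_set by blast
  ultimately show "set (shift_loop X ns) \<subseteq> ext_nodes N G"
    by (auto simp: shift_loop_def ext_nodes_def dest: in_set_butlastD)
  show "2 \<le> length (shift_loop X ns)"
    using assms(4) ns by (simp add: shift_union_def shift_loop_def)
  show "diff_clusters (nclu X) (shift_loop X ns)"
    using assms(4) ns by (simp add: shift_union_def diff_clusters_iff_distinct map_nclu_shift_loop)
  show "ASR eta gam a N X < ASR eta gam a N (loop_change X (shift_loop X ns))"
    using assms(4) ns by (simp add: shift_union_def loop_change_shift_loop)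
qed (use assms in auto)

theorem theorem2:
  fixes N :: "'u set" and G :: "'c set" and X :: "'u \<Rightarrow> 'c"
    and gam :: "'u \<Rightarrow> 'u set \<Rightarrow> real" and a Rreq :: "'u \<Rightarrow> real" and eta :: real
  assumes "finite N" and "finite G"
    and "\<forall>n\<in>N. X n \<in> G"
    and "eta > 0" and "\<forall>n\<in>N. a n > 0"
    and "\<nexists>vs. neg_loop gam a N G X vs
                \<and> ASR eta gam a N X < ASR eta gam a N (loop_change X vs)
                \<and> feasible eta gam a Rreq N G (loop_change X vs)"
  shows "all_stable eta gam a Rreq N G X"
proof -
  have no_exchange_union:
    "\<not> (exchange_union eta gam a N X ns \<and> feasible eta gam a Rreq N G (exchange_change X ns))" for ns
    using assms(6) exchange_union_neg_loop[OF assms(1,4)]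
    by (metis exchange_union_def loop_change_map_Inl)
  moreover have no_shift_union:
    "\<not> (shift_union eta gam a N X ns \<and> feasible eta gam a Rreq N G (shift_change X ns))" for ns
    using assms(6) shift_union_neg_loop[OF assms(1,4,3)]
    by (metis shift_union_def loop_change_shift_loop list.size(3) not_numeral_le_zero)
  ultimately show ?thesis
    by (simp add: all_stable_def)
qed

end
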